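(* Let $k\ge2$. Let $\alpha(x)=\forall y\,([y^{-1}xy,x]=e)$, $\beta(y)=\forall x\,(\alpha(x)\rightarrow y^{-1}xy=x^k)$, and let $\gamma(x,y,z,t)$ be a group formula such that for every $b_1\in Ab$ and all $n,l,m\in\mathbb{Z}$, $BS(1,k)\models\gamma(b_1^n,b_1^l,b_1^m,b_1)$ iff $nl=m$. Define $\tau(x,y,h,b_1)=\alpha(x)\wedge\alpha(y)\wedge([h,b_1]=e)\wedge\beta(b_1)\wedge\forall v\,\forall w\,\big([v,b_1]=[w,b_1]=e\wedge\gamma(h,v,w,b_1)\rightarrow\exists u\,(\alpha(u)\wedge[v,y]=[w,x][v,[u,v]])\big)$. Then for $x,y,h,b_1\in BS(1,k)$, $BS(1,k)\models\tau(x,y,h,b_1)$ if and only if $b_1\in Ab$, $x=a^l$ and $y=a^t$ for some $l,t\in\mathbb{Z}[1/k]$, $h=b_1^z$ for some $z\in\mathbb{Z}$, and $l\cdot z=t$.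
   Context: $BS(1,k)=\langle a,b\mid b^{-1}ab=a^k\rangle$, identified with $\mathbb{Z}[1/k]\rtimes\mathbb{Z}$ (pairs $(y,m)$, $y\in\mathbb{Z}[1/k]=\{zk^i:z,i\in\mathbb{Z}\}$, product $(y_1,m_1)(y_2,m_2)=(y_1+y_2k^{-m_1},m_1+m_2)$), with $a=(1,0)$, $b=(0,1)$; $a^y=(y,0)$ for $y\in\mathbb{Z}[1/k]$. $Ab=\{a^yb:y\in\mathbb{Z}[1/k]\}$. The commutator is $[x,y]=x^{-1}y^{-1}xy$. *)

theory Defs
  imports Complex_Main "HOL-Algebra.Group"
begin

definition Zk :: "int \<Rightarrow> rat set" where
  "Zk k = {of_int z * (of_int k) powi i | z i. True}"

text \<open>BS(1,k) realised as Z[1/k] \<rtimes> Z with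
  (y1,m1)(y2,m2) = (y1 + y2 k^(-m1), m1 + m2).\<close>
definition BS :: "int \<Rightarrow> (rat \<times> int) monoid" where
  "BS k = \<lparr> carrier = Zk k \<times> UNIV,
            mult = (\<lambda>p q. (fst p + fst q * (of_int k) powi (- snd p), snd p + snd q)),
            one = (0, 0) \<rparr>"

definition apow :: "rat \<Rightarrow> rat \<times> int" where
  "apow y = (y, 0)"

definition bgen :: "rat \<times> int" where
  "bgen = (0, 1)"

definition Ab :: "int \<Rightarrow> (rat \<times> int) set" where
  "Ab k = {apow y \<otimes>\<^bsub>BS k\<^esub> bgen | y. y \<in> Zk k}"

definition comm :: "('a, 'b) monoid_scheme \<Rightarrow> 'a \<Rightarrow> 'a \<Rightarrow> 'a" where
  "comm G x y = inv\<^bsub>G\<^esub> x \<otimes>\<^bsub>G\<^esub> inv\<^bsub>G\<^esub> y \<otimes>\<^bsub>G\<^esub> x \<otimes>\<^bsub>G\<^esub> y"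

definition alpha :: "int \<Rightarrow> rat \<times> int \<Rightarrow> bool" where
  "alpha k x = (\<forall>y\<in>carrier (BS k).
      comm (BS k) (inv\<^bsub>BS k\<^esub> y \<otimes>\<^bsub>BS k\<^esub> x \<otimes>\<^bsub>BS k\<^esub> y) x = \<one>\<^bsub>BS k\<^esub>)"

definition beta :: "int \<Rightarrow> rat \<times> int \<Rightarrow> bool" where
  "beta k y = (\<forall>x\<in>carrier (BS k). alpha k x \<longrightarrow>
      inv\<^bsub>BS k\<^esub> y \<otimes>\<^bsub>BS k\<^esub> x \<otimes>\<^bsub>BS k\<^esub> y = x [^]\<^bsub>BS k\<^esub> k)"

definition tau :: "int \<Rightarrow> (rat \<times> int \<Rightarrow> rat \<times> int \<Rightarrow> rat \<times> int \<Rightarrow> rat \<times> int \<Rightarrow> bool)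
    \<Rightarrow> rat \<times> int \<Rightarrow> rat \<times> int \<Rightarrow> rat \<times> int \<Rightarrow> rat \<times> int \<Rightarrow> bool" where
  "tau k \<gamma> x y h b1 =
     (alpha k x \<and> alpha k y \<and> comm (BS k) h b1 = \<one>\<^bsub>BS k\<^esub> \<and> beta k b1 \<and>
      (\<forall>v\<in>carrier (BS k). \<forall>w\<in>carrier (BS k).
         comm (BS k) v b1 = \<one>\<^bsub>BS k\<^esub> \<and> comm (BS k) w b1 = \<one>\<^bsub>BS k\<^esub> \<and> \<gamma> h v w b1 \<longrightarrow>
         (\<exists>u\<in>carrier (BS k). alpha k u \<and>
            comm (BS k) v y = comm (BS k) w x \<otimes>\<^bsub>BS k\<^esub> comm (BS k) v (comm (BS k) u v))))"

end

theory Submission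
  imports Defs "HOL-Algebra.Elementary_Groups"
begin

(* alpha holds exactly on the abelian normal subgroup A = {a^y} (second coordinate 0), beta exactly
   on the coset Ab, and the centralizer of b1 in Ab is the cyclic group generated by b1. Hence
   tau(x,y,h,b1) forces x = a^l, y = a^t, h = b1^z, and gamma makes its last clause range over
   v = b1^p, w = b1^(pz). With u = a^r and Q = k^p that clause reads
     t (1 - Q) = l (1 - Q^z) + r (Q - 1) (1 - Q)   for some r in Z[1/k].
   Since Q^z = 1 + z (Q - 1) modulo (Q - 1)^2 in Z[1/k], this is solvable iff Q - 1 divides t - l z
   in Z[1/k]. Holding for all p >= 1 this forces t = l z: k^p - 1 is coprime to k, so it divides the
   numerator d of t - l z, and it exceeds |d| once p > |d|. *)

lemma power_int_inject_exp:
  fixes a :: "'a :: linordered_field"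
  assumes "1 < a"
  shows "a powi m = a powi n \<longleftrightarrow> m = n"
proof
  assume eq: "a powi m = a powi n"
  show "m = n"
  proof (rule linorder_cases)
    assume "m < n"
    then show ?thesis using power_int_strict_increasing[OF _ assms] eq by force
  next
    assume "n < m"
    then show ?thesis using power_int_strict_increasing[OF _ assms] eq by force
  qed
qed simp

lemma exp_plus_one_le_int_power:
  fixes k :: int
  assumes "k \<ge> 2"
  shows "k ^ p \<ge> int p + 1"
proof (induction p)
  case (Suc p)
  have "int (Suc p) + 1 \<le> 2 * (int p + 1)" by simp
  also have "\<dots> \<le> k * k ^ p" using Suc assms by (intro mult_mono) auto
  finally show ?case by simp
qed simp

lemma coprime_power_minus_one:
  fixes k :: int
  assumes "p \<ge> 1"
  shows "coprime (k ^ p - 1) k"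
proof (rule coprimeI)
  fix c assume "c dvd k ^ p - 1" and "c dvd k"
  moreover from \<open>c dvd k\<close> have "c dvd k ^ p" using assms by (cases p) auto
  ultimately have "c dvd k ^ p - (k ^ p - 1)" by (simp only: dvd_diff)
  then show "is_unit c" by simp
qed

lemma (in group) comm_eq_one_iff:
  assumes "g \<in> carrier G" "h \<in> carrier G"
  shows "comm G g h = \<one> \<longleftrightarrow> g \<otimes> h = h \<otimes> g"
proof -
  have "comm G g h = inv (h \<otimes> g) \<otimes> (g \<otimes> h)"
    using assms by (simp add: comm_def inv_mult_group m_assoc)
  also have "\<dots> = \<one> \<longleftrightarrow> g \<otimes> h = h \<otimes> g \<otimes> \<one>"
    using assms by (intro inv_solve_left') simp_all
  finally show ?thesis using assms by simp
qed

lemma (in group) comm_int_pow_self: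
  assumes "b \<in> carrier G"
  shows "comm G (b [^] (n :: int)) b = \<one>"
proof -
  have "b [^] n \<otimes> b = b \<otimes> b [^] n"
    using assms int_pow_mult[of b n 1] int_pow_mult[of b 1 n] by (simp add: add.commute)
  then show ?thesis using assms by (simp add: comm_eq_one_iff)
qed

section \<open>The ring Z[1/k]\<close>

lemma Zk_iff_scaled_Ints:
  assumes "k \<noteq> 0"
  shows "q \<in> Zk k \<longleftrightarrow> (\<exists>n. of_int k ^ n * q \<in> \<int>)"
proof
  assume "q \<in> Zk k"
  then obtain z i where q: "q = of_int z * of_int k powi i" by (auto simp: Zk_def)
  have "of_int k ^ nat (- i) = (of_int k :: rat) powi int (nat (- i))"
    by (simp only: power_int_of_nat)
  then have "of_int k ^ nat (- i) * q = of_int z * of_int k powi (i + int (nat (- i)))"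
    using assms by (simp add: q power_int_add)
  also have "\<dots> = of_int (z * k ^ nat (i + int (nat (- i))))"
    by (simp add: power_int_nonneg_exp)
  finally show "\<exists>n. of_int k ^ n * q \<in> \<int>" by (metis Ints_of_int)
next
  assume "\<exists>n. of_int k ^ n * q \<in> \<int>"
  then obtain n z where "of_int k ^ n * q = of_int z" by (auto elim: Ints_cases)
  then have "q = of_int z * of_int k powi (- int n)"
    using assms by (simp add: power_int_minus field_simps)
  then show "q \<in> Zk k" by (auto simp: Zk_def)
qed

lemma Zk_of_int [simp]: "of_int z \<in> Zk k"
  unfolding Zk_def by (rule CollectI, rule exI[of _ z], rule exI[of _ 0]) simp

lemma Zk_of_nat [simp]: "of_nat n \<in> Zk k"
  using Zk_of_int[of "int n" k] by simp

lemma Zk_0 [simp]: "0 \<in> Zk k" and Zk_1 [simp]: "1 \<in> Zk k"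
  using Zk_of_int[of 0 k] Zk_of_int[of 1 k] by simp_all

lemma Zk_power_int [simp]: "of_int k powi i \<in> Zk k"
  unfolding Zk_def by (rule CollectI, rule exI[of _ 1], rule exI[of _ i]) simp

lemma Zk_uminus [simp]:
  assumes "q \<in> Zk k"
  shows "- q \<in> Zk k"
proof -
  obtain z i where "q = of_int z * of_int k powi i" using assms by (auto simp: Zk_def)
  then have "- q = of_int (- z) * of_int k powi i" by simp
  then show ?thesis unfolding Zk_def by blast
qed

lemma Zk_add [simp]:
  assumes "k \<noteq> 0" "q \<in> Zk k" "r \<in> Zk k"
  shows "q + r \<in> Zk k"
proof -
  obtain n m where "of_int k ^ n * q \<in> \<int>" "of_int k ^ m * r \<in> \<int>"
    using assms Zk_iff_scaled_Ints by blast
  then have "of_int k ^ m * (of_int k ^ n * q) + of_int k ^ n * (of_int k ^ m * r) \<in> \<int>"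
    by (meson Ints_add Ints_mult Ints_power Ints_of_int)
  then have "of_int k ^ (n + m) * (q + r) \<in> \<int>" by (simp add: power_add algebra_simps)
  then show ?thesis using assms Zk_iff_scaled_Ints by blast
qed

lemma Zk_mult [simp]:
  assumes "k \<noteq> 0" "q \<in> Zk k" "r \<in> Zk k"
  shows "q * r \<in> Zk k"
proof -
  obtain n m where "of_int k ^ n * q \<in> \<int>" "of_int k ^ m * r \<in> \<int>"
    using assms Zk_iff_scaled_Ints by blast
  then have "(of_int k ^ n * q) * (of_int k ^ m * r) \<in> \<int>" by (rule Ints_mult)
  then have "of_int k ^ (n + m) * (q * r) \<in> \<int>" by (simp add: power_add algebra_simps)
  then show ?thesis using assms Zk_iff_scaled_Ints by blast
qed

lemma Zk_diff [simp]: "k \<noteq> 0 \<Longrightarrow> q \<in> Zk k \<Longrightarrow> r \<in> Zk k \<Longrightarrow> q - r \<in> Zk k"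
  using Zk_add[of k q "- r"] by simp

lemma Zk_power_expansion:
  assumes "k \<noteq> 0" "Q \<in> Zk k"
  shows "\<exists>c\<in>Zk k. Q ^ n = 1 + of_nat n * (Q - 1) + (Q - 1)\<^sup>2 * c"
proof (induction n)
  case 0
  show ?case by (intro bexI[of _ 0]) simp_all
next
  case (Suc n)
  then obtain c where "c \<in> Zk k" and c: "Q ^ n = 1 + of_nat n * (Q - 1) + (Q - 1)\<^sup>2 * c"
    by blast
  then have "Q * c + of_nat n \<in> Zk k" using assms by simp
  moreover have "Q ^ Suc n = 1 + of_nat (Suc n) * (Q - 1) + (Q - 1)\<^sup>2 * (Q * c + of_nat n)"
    by (simp add: c power2_eq_square algebra_simps)
  ultimately show ?case by blast
qed

lemma Zk_power_int_expansion:
  assumes k: "k \<noteq> 0" and Q: "Q \<in> Zk k" "inverse Q \<in> Zk k" "Q \<noteq> 0"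
  shows "\<exists>c\<in>Zk k. Q powi z = 1 + of_int z * (Q - 1) + (Q - 1)\<^sup>2 * c"
proof (cases "z \<ge> 0")
  case True
  then show ?thesis using Zk_power_expansion[OF k Q(1), of "nat z"] by (simp add: power_int_def)
next
  case False
  define n where "n = nat (- z)"
  define Q' where "Q' = inverse Q"
  obtain c where c: "c \<in> Zk k" "Q' ^ n = 1 + of_nat n * (Q' - 1) + (Q' - 1)\<^sup>2 * c"
    using Zk_power_expansion[OF k Q(2)] unfolding Q'_def by blast
  have "Q powi z = Q' ^ n"
    using False by (simp add: n_def Q'_def power_int_def power_inverse)
  also have "\<dots> = 1 + of_int z * (Q - 1) + (Q - 1)\<^sup>2 * (of_nat n * Q' + Q' * Q' * c)"
  proof -
    have "Q * Q' = 1" using Q(3) by (simp add: Q'_def)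
    moreover have "of_int z = - (of_nat n :: rat)" using False by (simp add: n_def)
    ultimately show ?thesis unfolding c(2) power2_eq_square by algebra
  qed
  finally show ?thesis
    using k Q c(1) by (intro bexI[of _ "of_nat n * Q' + Q' * Q' * c"])
      (simp_all add: Q'_def)
qed

lemma Zk_divisible_by_all_powers_eq_0:
  assumes k: "k \<ge> 2" and D: "D \<in> Zk k"
    and dvd: "\<And>p. p \<ge> 1 \<Longrightarrow> \<exists>e\<in>Zk k. D = (of_int k ^ p - 1) * e"
  shows "D = 0"
proof -
  have k0: "k \<noteq> 0" using k by simp
  obtain n d where d: "of_int k ^ n * D = of_int d"
    using D k0 by (auto simp: Zk_iff_scaled_Ints elim!: Ints_cases)
  define p where "p = nat \<bar>d\<bar> + 1"
  obtain e where "e \<in> Zk k" and e: "D = (of_int k ^ p - 1) * e" using dvd[of p] by (auto simp: p_def)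
  then obtain m e' where e': "of_int k ^ m * e = of_int e'"
    using k0 by (auto simp: Zk_iff_scaled_Ints elim!: Ints_cases)
  have "of_int (k ^ m * d) = (of_int k ^ m * of_int k ^ n * D :: rat)" by (simp add: d)
  also have "\<dots> = of_int ((k ^ p - 1) * (k ^ n * e'))" by (simp add: e algebra_simps flip: e')
  finally have "(k ^ p - 1) dvd k ^ m * d" by (metis dvd_triv_left of_int_eq_iff)
  moreover have "coprime (k ^ p - 1) (k ^ m)"
    using coprime_power_minus_one[of p k] by (simp add: p_def)
  ultimately have "(k ^ p - 1) dvd d" by (simp add: coprime_dvd_mult_right_iff)
  moreover have "\<bar>d\<bar> < k ^ p - 1" using exp_plus_one_le_int_power[OF k, of p] by (simp add: p_def)
  ultimately have "d = 0" using dvd_imp_le_int[of d "k ^ p - 1"] by linarith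
  then show "D = 0" using d k0 by simp
qed

lemma Zk_equation_solvable_iff:
  fixes p z :: int
  assumes k: "k \<noteq> 0" and l: "l \<in> Zk k" and t: "t \<in> Zk k"
  defines "Q \<equiv> of_int k powi p"
  shows "(\<exists>r\<in>Zk k. t * (1 - Q) = l * (1 - Q powi z) + r * (Q - 1) * (1 - Q)) \<longleftrightarrow>
         Q = 1 \<or> (\<exists>e\<in>Zk k. t - l * of_int z = (Q - 1) * e)"
proof -
  have Q: "Q \<in> Zk k" "inverse Q \<in> Zk k" "Q \<noteq> 0"
    using k by (simp_all add: Q_def flip: power_int_minus)
  obtain c where c: "c \<in> Zk k" "Q powi z = 1 + of_int z * (Q - 1) + (Q - 1)\<^sup>2 * c"
    using Zk_power_int_expansion[OF k Q] by blast
  have eq_iff: "t * (1 - Q) = l * (1 - Q powi z) + r * (Q - 1) * (1 - Q) \<longleftrightarrow>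
      (1 - Q) * (t - l * of_int z - (Q - 1) * (l * c + r)) = 0" for r
    unfolding c(2) by (auto simp: power2_eq_square algebra_simps)
  show ?thesis
  proof
    assume "\<exists>r\<in>Zk k. t * (1 - Q) = l * (1 - Q powi z) + r * (Q - 1) * (1 - Q)"
    then obtain r where "r \<in> Zk k" "(1 - Q) * (t - l * of_int z - (Q - 1) * (l * c + r)) = 0"
      using eq_iff by blast
    moreover have "l * c + r \<in> Zk k" using k l c(1) \<open>r \<in> Zk k\<close> by simp
    ultimately show "Q = 1 \<or> (\<exists>e\<in>Zk k. t - l * of_int z = (Q - 1) * e)" by force
  next
    assume "Q = 1 \<or> (\<exists>e\<in>Zk k. t - l * of_int z = (Q - 1) * e)"
    then show "\<exists>r\<in>Zk k. t * (1 - Q) = l * (1 - Q powi z) + r * (Q - 1) * (1 - Q)"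
    proof
      assume "Q = 1"
      then show ?thesis by (intro bexI[of _ 0]) simp_all
    next
      assume "\<exists>e\<in>Zk k. t - l * of_int z = (Q - 1) * e"
      then obtain e where e: "e \<in> Zk k" "t - l * of_int z = (Q - 1) * e" by blast
      then have "(1 - Q) * (t - l * of_int z - (Q - 1) * (l * c + (e - l * c))) = 0" by simp
      then have "t * (1 - Q) = l * (1 - Q powi z) + (e - l * c) * (Q - 1) * (1 - Q)"
        using eq_iff by blast
      moreover have "e - l * c \<in> Zk k" using k l c(1) e(1) by simp
      ultimately show ?thesis by blast
    qed
  qed
qed

lemma Zk_equation_solvable_for_all_powers_iff:
  assumes k: "k \<ge> 2" and l: "l \<in> Zk k" and t: "t \<in> Zk k"
  shows "(\<forall>p. \<exists>r\<in>Zk k. t * (1 - of_int k powi p) =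
            l * (1 - (of_int k powi p) powi z) + r * (of_int k powi p - 1) * (1 - of_int k powi p))
         \<longleftrightarrow> t = l * of_int z"
proof
  assume solvable: "\<forall>p. \<exists>r\<in>Zk k. t * (1 - of_int k powi p) =
      l * (1 - (of_int k powi p) powi z) + r * (of_int k powi p - 1) * (1 - of_int k powi p)"
  have "t - l * of_int z = 0"
  proof (rule Zk_divisible_by_all_powers_eq_0[OF k])
    show "t - l * of_int z \<in> Zk k" using k l t by simp
  next
    fix p :: nat assume "p \<ge> 1"
    then have "(of_int k :: rat) powi int p \<noteq> 1"
      using power_int_inject_exp[of "of_int k :: rat" "int p" 0] k by simp
    moreover have "\<exists>r\<in>Zk k. t * (1 - of_int k powi int p) = l * (1 - (of_int k powi int p) powi z)
        + r * (of_int k powi int p - 1) * (1 - of_int k powi int p)"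
      using solvable by blast
    ultimately show "\<exists>e\<in>Zk k. t - l * of_int z = (of_int k ^ p - 1) * e"
      using Zk_equation_solvable_iff[of k l t "int p" z] k l t by simp
  qed
  then show "t = l * of_int z" by simp
next
  assume "t = l * of_int z"
  then show "\<forall>p. \<exists>r\<in>Zk k. t * (1 - of_int k powi p) =
      l * (1 - (of_int k powi p) powi z) + r * (of_int k powi p - 1) * (1 - of_int k powi p)"
    using Zk_equation_solvable_iff[of k l t] k l t by (auto intro: bexI[of _ 0])
qed

section \<open>The group BS(1,k)\<close>

lemma carrier_BS [simp]: "x \<in> carrier (BS k) \<longleftrightarrow> fst x \<in> Zk k"
  by (cases x) (simp add: BS_def)

lemma mult_BS [simp]: "(c, m) \<otimes>\<^bsub>BS k\<^esub> (e, n) = (c + e * of_int k powi (- m), m + n)"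
  by (simp add: BS_def)

lemma one_BS [simp]: "\<one>\<^bsub>BS k\<^esub> = (0, 0)"
  by (simp add: BS_def)

lemma group_BS:
  assumes k: "k \<noteq> 0"
  shows "group (BS k)"
proof (rule groupI)
  fix x y z
  assume "x \<in> carrier (BS k)" "y \<in> carrier (BS k)" "z \<in> carrier (BS k)"
  then show "x \<otimes>\<^bsub>BS k\<^esub> y \<otimes>\<^bsub>BS k\<^esub> z = x \<otimes>\<^bsub>BS k\<^esub> (y \<otimes>\<^bsub>BS k\<^esub> z)"
    using k by (simp add: BS_def power_int_add power_int_minus algebra_simps)
next
  fix x assume "x \<in> carrier (BS k)"
  then show "\<exists>y\<in>carrier (BS k). y \<otimes>\<^bsub>BS k\<^esub> x = \<one>\<^bsub>BS k\<^esub>"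
    using k by (intro bexI[of _ "(- fst x * of_int k powi snd x, - snd x)"]) (auto simp: BS_def)
qed (use k in \<open>auto simp: BS_def\<close>)

lemma inv_BS [simp]:
  assumes "k \<noteq> 0" "c \<in> Zk k"
  shows "inv\<^bsub>BS k\<^esub> (c, m) = (- c * of_int k powi m, - m)"
  using assms by (intro group.inv_equality[OF group_BS]) simp_all

lemma comm_BS:
  assumes k: "k \<noteq> 0" and "c \<in> Zk k" "e \<in> Zk k"
  shows "comm (BS k) (c, m) (e, n) =
    (c * (of_int k powi (m + n) - of_int k powi m) + e * (of_int k powi n - of_int k powi (m + n)), 0)"
  using assms by (simp add: comm_def power_int_add algebra_simps)

lemma comm_BS_right_abelian [simp]:
  "k \<noteq> 0 \<Longrightarrow> c \<in> Zk k \<Longrightarrow> e \<in> Zk k \<Longrightarrow> comm (BS k) (c, m) (e, 0) = (e * (1 - of_int k powi m), 0)"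
  by (simp add: comm_BS algebra_simps)

lemma comm_BS_left_abelian [simp]:
  "k \<noteq> 0 \<Longrightarrow> c \<in> Zk k \<Longrightarrow> e \<in> Zk k \<Longrightarrow> comm (BS k) (e, 0) (c, m) = (e * (of_int k powi m - 1), 0)"
  by (simp add: comm_BS algebra_simps)

lemma conj_BS:
  assumes "k \<noteq> 0" "c \<in> Zk k" "e \<in> Zk k"
  shows "inv\<^bsub>BS k\<^esub> (e, n) \<otimes>\<^bsub>BS k\<^esub> (c, m) \<otimes>\<^bsub>BS k\<^esub> (e, n) =
    ((c - e) * of_int k powi n + e * of_int k powi (n - m), m)"
  using assms by (simp add: power_int_diff power_int_minus field_simps)

lemma snd_hom_BS: "k \<noteq> 0 \<Longrightarrow> snd \<in> hom (BS k) integer_group"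
  by (rule homI) (auto simp: BS_def)

lemma snd_int_pow_BS:
  assumes "k \<noteq> 0" "g \<in> carrier (BS k)"
  shows "snd (g [^]\<^bsub>BS k\<^esub> n) = n * snd g"
  using hom_int_pow[OF snd_hom_BS[OF assms(1)] assms(2) group_BS[OF assms(1)] group_integer_group]
  by simp

lemma int_pow_BS_abelian:
  assumes k: "k \<noteq> 0" and c: "c \<in> Zk k"
  shows "(c, 0) [^]\<^bsub>BS k\<^esub> n = (of_int n * c, 0)"
proof -
  interpret group "BS k" using group_BS[OF k] .
  show ?thesis
  proof (induction n rule: int_induct[where k = 0])
    case base
    show ?case by simp
  next
    case (step1 i)
    then show ?case using int_pow_mult[of "(c, 0)" i 1] c by (simp add: algebra_simps)
  next
    case (step2 i)
    then show ?case using int_pow_diff[of "(c, 0)" i 1] k c by (simp add: algebra_simps)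
  qed
qed

lemma alpha_iff_snd_eq_0:
  assumes k: "k \<ge> 2" and x: "x \<in> carrier (BS k)"
  shows "alpha k x \<longleftrightarrow> snd x = 0"
proof -
  have k0: "k \<noteq> 0" and k1: "1 < (of_int k :: rat)" using k by simp_all
  obtain c m where xe: "x = (c, m)" and c: "c \<in> Zk k" using x by (cases x) auto
  define K K' where "K = (of_int k :: rat) powi m" and "K' = (of_int k :: rat) powi (- m)"
  have K'K: "K' * K = 1" using k0 by (simp add: K_def K'_def power_int_minus)
  have KK: "of_int k powi (m + m) = K * K" unfolding K_def by (rule power_int_add) (use k0 in simp)
  show ?thesis
  proof
    assume "alpha k x"
    (* Conjugating x by a = (1, 0) and commuting with x gives (- (k^m - 1)^2, 0). *)
    then have "comm (BS k) (inv\<^bsub>BS k\<^esub> (1, 0) \<otimes>\<^bsub>BS k\<^esub> (c, m) \<otimes>\<^bsub>BS k\<^esub> (1, 0)) (c, m) = (0, 0)"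
      unfolding alpha_def xe by force
    then have "comm (BS k) (c - 1 + K', m) (c, m) = (0, 0)"
      using conj_BS[OF k0 c Zk_1, of 0 m] by (simp add: K'_def)
    moreover have "comm (BS k) (c - 1 + K', m) (c, m) = ((K' - 1) * (K * K - K), 0)"
    proof -
      have "c - 1 + K' \<in> Zk k" using k0 c by (simp add: K'_def)
      from comm_BS[OF k0 this c, of m m] show ?thesis
        by (simp only: KK flip: K_def) (simp add: algebra_simps)
    qed
    moreover have "(K' - 1) * (K * K - K) = - (K - 1)\<^sup>2"
      using K'K unfolding power2_eq_square by algebra
    ultimately have "(K - 1)\<^sup>2 = 0" by simp
    then have "of_int k powi m = (of_int k powi 0 :: rat)" by (simp add: K_def)
    then have "m = 0" using power_int_inject_exp[OF k1] by blast
    then show "snd x = 0" using xe by simp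
  next
    assume "snd x = 0"
    then have xe: "x = (c, 0)" using xe by simp
    show "alpha k x" unfolding alpha_def
    proof
      fix y assume "y \<in> carrier (BS k)"
      then obtain e n where ye: "y = (e, n)" and e: "e \<in> Zk k" by (cases y) auto
      have "inv\<^bsub>BS k\<^esub> y \<otimes>\<^bsub>BS k\<^esub> x \<otimes>\<^bsub>BS k\<^esub> y = (c * of_int k powi n, 0)"
        using conj_BS[OF k0 c e, of n 0] by (simp add: xe ye algebra_simps)
      then show "comm (BS k) (inv\<^bsub>BS k\<^esub> y \<otimes>\<^bsub>BS k\<^esub> x \<otimes>\<^bsub>BS k\<^esub> y) x = \<one>\<^bsub>BS k\<^esub>"
        using k0 c by (simp add: xe)
    qed
  qed
qed

lemma alpha_iff_apow:
  assumes "k \<ge> 2" "g \<in> carrier (BS k)"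
  shows "alpha k g \<longleftrightarrow> (\<exists>l\<in>Zk k. g = apow l)"
  using alpha_iff_snd_eq_0[OF assms] assms(2) by (cases g) (auto simp: apow_def)

lemma Ab_iff: "b \<in> Ab k \<longleftrightarrow> b \<in> carrier (BS k) \<and> snd b = 1"
  by (cases b) (auto simp: Ab_def apow_def bgen_def)

lemma beta_iff_Ab:
  assumes k: "k \<ge> 2" and b: "b \<in> carrier (BS k)"
  shows "beta k b \<longleftrightarrow> b \<in> Ab k"
proof -
  have k0: "k \<noteq> 0" and k1: "1 < (of_int k :: rat)" using k by simp_all
  obtain d m where be: "b = (d, m)" and d: "d \<in> Zk k" using b by (cases b) auto
  have conj: "inv\<^bsub>BS k\<^esub> b \<otimes>\<^bsub>BS k\<^esub> apow c \<otimes>\<^bsub>BS k\<^esub> b = (c * of_int k powi m, 0)"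
    if "c \<in> Zk k" for c
    using conj_BS[OF k0 that d, of m 0] by (simp add: apow_def be algebra_simps)
  have "beta k b \<longleftrightarrow> m = 1"
  proof
    assume "beta k b"
    then have "inv\<^bsub>BS k\<^esub> b \<otimes>\<^bsub>BS k\<^esub> apow 1 \<otimes>\<^bsub>BS k\<^esub> b = apow 1 [^]\<^bsub>BS k\<^esub> k"
      unfolding beta_def using alpha_iff_apow[OF k] by (simp add: apow_def)
    then have "(of_int k :: rat) powi m = of_int k powi 1"
      using conj[OF Zk_1] int_pow_BS_abelian[OF k0 Zk_1, of k] by (simp add: apow_def)
    then show "m = 1" using power_int_inject_exp[OF k1] by blast
  next
    assume m: "m = 1"
    show "beta k b" unfolding beta_def
    proof (intro ballI impI)
      fix x assume "x \<in> carrier (BS k)" "alpha k x"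
      then obtain c where "c \<in> Zk k" "x = apow c" using alpha_iff_apow[OF k] by blast
      then show "inv\<^bsub>BS k\<^esub> b \<otimes>\<^bsub>BS k\<^esub> x \<otimes>\<^bsub>BS k\<^esub> b = x [^]\<^bsub>BS k\<^esub> k"
        using conj int_pow_BS_abelian[OF k0] m by (simp add: apow_def mult.commute)
    qed
  qed
  then show ?thesis using b be by (simp add: Ab_iff)
qed

lemma int_pow_Ab:
  assumes k: "k \<noteq> 0" and b: "b \<in> Ab k"
  obtains c where "c \<in> Zk k" "b [^]\<^bsub>BS k\<^esub> n = (c, n)"
proof -
  have "b [^]\<^bsub>BS k\<^esub> n \<in> carrier (BS k)"
    using group.int_pow_closed[OF group_BS[OF k]] b by (simp add: Ab_iff)
  moreover have "snd (b [^]\<^bsub>BS k\<^esub> n) = n" using snd_int_pow_BS[OF k, of b n] b by (simp add: Ab_iff)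
  ultimately show ?thesis using that by (metis carrier_BS prod.collapse)
qed

lemma centralizer_Ab_BS:
  assumes k: "k \<ge> 2" and b: "b \<in> Ab k" and h: "h \<in> carrier (BS k)"
  shows "comm (BS k) h b = \<one>\<^bsub>BS k\<^esub> \<longleftrightarrow> (\<exists>z::int. h = b [^]\<^bsub>BS k\<^esub> z)"
proof
  have k0: "k \<noteq> 0" using k by simp
  obtain d where be: "b = (d, 1)" and d: "d \<in> Zk k" using b by (cases b) (auto simp: Ab_iff)
  obtain c m where he: "h = (c, m)" and c: "c \<in> Zk k" using h by (cases h) auto
  obtain c' where c': "c' \<in> Zk k" and pe: "b [^]\<^bsub>BS k\<^esub> m = (c', m)"
    using int_pow_Ab[OF k0 b] by metis
  define K where "K = (of_int k :: rat) powi m"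
  have comm_b: "comm (BS k) (e, m) b = (e * (K * of_int k - K) + d * (of_int k - K * of_int k), 0)"
    if "e \<in> Zk k" for e
    using k0 d that by (simp add: comm_BS be K_def power_int_add algebra_simps)
  (* Commuting with b is an affine condition on the first coordinate with slope K (k - 1) \<noteq> 0,
     so h and b^m, which have the same second coordinate, coincide. *)
  assume "comm (BS k) h b = \<one>\<^bsub>BS k\<^esub>"
  moreover have "comm (BS k) (c', m) b = \<one>\<^bsub>BS k\<^esub>"
    using group.comm_int_pow_self[OF group_BS[OF k0], of b m] b pe by (simp add: Ab_iff)
  ultimately have "c * (K * (of_int k - 1)) = c' * (K * (of_int k - 1))"
    using comm_b c c' he by (simp add: algebra_simps)
  moreover have "K * (of_int k - 1) \<noteq> 0" using k by (simp add: K_def)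
  ultimately have "c = c'" by simp
  then show "\<exists>z::int. h = b [^]\<^bsub>BS k\<^esub> z" using he pe by (intro exI[of _ m]) simp
next
  assume "\<exists>z::int. h = b [^]\<^bsub>BS k\<^esub> z"
  then obtain z :: int where "h = b [^]\<^bsub>BS k\<^esub> z" by blast
  then show "comm (BS k) h b = \<one>\<^bsub>BS k\<^esub>"
    using group.comm_int_pow_self[OF group_BS, of k b z] b k by (simp add: Ab_iff)
qed

lemma comm_equation_BS_iff:
  assumes "k \<noteq> 0" "c \<in> Zk k" "e \<in> Zk k" "l \<in> Zk k" "t \<in> Zk k" "r \<in> Zk k"
  shows "comm (BS k) (c, p) (apow t) =
           comm (BS k) (e, q) (apow l) \<otimes>\<^bsub>BS k\<^esub> comm (BS k) (c, p) (comm (BS k) (apow r) (c, p))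
         \<longleftrightarrow> t * (1 - of_int k powi p) =
           l * (1 - of_int k powi q) + r * (of_int k powi p - 1) * (1 - of_int k powi p)"
  using assms by (simp add: apow_def)

lemma tau_last_conjunct_iff:
  assumes k: "k \<ge> 2"
    and \<gamma>: "\<forall>b \<in> Ab k. \<forall>n l m :: int.
           \<gamma> (b [^]\<^bsub>BS k\<^esub> n) (b [^]\<^bsub>BS k\<^esub> l) (b [^]\<^bsub>BS k\<^esub> m) b \<longleftrightarrow> n * l = m"
    and b1: "b1 \<in> Ab k" and l: "l \<in> Zk k" and t: "t \<in> Zk k"
  shows "(\<forall>v\<in>carrier (BS k). \<forall>w\<in>carrier (BS k).
           comm (BS k) v b1 = \<one>\<^bsub>BS k\<^esub> \<and> comm (BS k) w b1 = \<one>\<^bsub>BS k\<^esub> \<and>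
           \<gamma> (b1 [^]\<^bsub>BS k\<^esub> z) v w b1 \<longrightarrow>
           (\<exists>u\<in>carrier (BS k). alpha k u \<and>
              comm (BS k) v (apow t) =
                comm (BS k) w (apow l) \<otimes>\<^bsub>BS k\<^esub> comm (BS k) v (comm (BS k) u v)))
    \<longleftrightarrow> (\<forall>p. \<exists>r\<in>Zk k. t * (1 - of_int k powi p) =
           l * (1 - (of_int k powi p) powi z) + r * (of_int k powi p - 1) * (1 - of_int k powi p))"
    (is "(\<forall>v\<in>_. \<forall>w\<in>_. ?hyp v w \<longrightarrow> (\<exists>u\<in>_. alpha k u \<and> ?eq v w u)) \<longleftrightarrow> (\<forall>p. \<exists>r\<in>Zk k. ?sol p r)")
proof -
  have k0: "k \<noteq> 0" using k by simp
  interpret group "BS k" using group_BS[OF k0] .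
  have b1_carrier: "b1 \<in> carrier (BS k)" using b1 by (simp add: Ab_iff)
  have eq_iff: "?eq (b1 [^]\<^bsub>BS k\<^esub> p) (b1 [^]\<^bsub>BS k\<^esub> (p * z)) (apow r) \<longleftrightarrow> ?sol p r"
    if "r \<in> Zk k" for p r
  proof -
    obtain c e where "c \<in> Zk k" "b1 [^]\<^bsub>BS k\<^esub> p = (c, p)"
      and "e \<in> Zk k" "b1 [^]\<^bsub>BS k\<^esub> (p * z) = (e, p * z)"
      using int_pow_Ab[OF k0 b1] by metis
    then show ?thesis using comm_equation_BS_iff[OF k0 _ _ l t that] by (simp add: power_int_mult)
  qed
  show ?thesis
  proof
    assume H: "\<forall>v\<in>carrier (BS k). \<forall>w\<in>carrier (BS k). ?hyp v w \<longrightarrow>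
                 (\<exists>u\<in>carrier (BS k). alpha k u \<and> ?eq v w u)"
    show "\<forall>p. \<exists>r\<in>Zk k. ?sol p r"
    proof
      fix p :: int
      have "?hyp (b1 [^]\<^bsub>BS k\<^esub> p) (b1 [^]\<^bsub>BS k\<^esub> (p * z))"
        using comm_int_pow_self[OF b1_carrier] \<gamma> b1 by (simp add: mult.commute)
      then obtain u where "u \<in> carrier (BS k)" "alpha k u"
        and "?eq (b1 [^]\<^bsub>BS k\<^esub> p) (b1 [^]\<^bsub>BS k\<^esub> (p * z)) u"
        using H b1_carrier by blast
      then show "\<exists>r\<in>Zk k. ?sol p r" using alpha_iff_apow[OF k] eq_iff by blast
    qed
  next
    assume R: "\<forall>p. \<exists>r\<in>Zk k. ?sol p r"
    show "\<forall>v\<in>carrier (BS k). \<forall>w\<in>carrier (BS k). ?hyp v w \<longrightarrow>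
            (\<exists>u\<in>carrier (BS k). alpha k u \<and> ?eq v w u)"
    proof (intro ballI impI)
      fix v w assume "v \<in> carrier (BS k)" "w \<in> carrier (BS k)" and hyp: "?hyp v w"
      then obtain p q :: int where v: "v = b1 [^]\<^bsub>BS k\<^esub> p" and w: "w = b1 [^]\<^bsub>BS k\<^esub> q"
        using centralizer_Ab_BS[OF k b1] by meson
      then have "q = p * z" using hyp \<gamma> b1 by (simp add: mult.commute)
      obtain r where "r \<in> Zk k" and "?sol p r" using R by blast
      then have "apow r \<in> carrier (BS k)" "alpha k (apow r)" and "?eq v w (apow r)"
        using alpha_iff_apow[OF k] eq_iff v w \<open>q = p * z\<close> by (auto simp: apow_def)
      then show "\<exists>u\<in>carrier (BS k). alpha k u \<and> ?eq v w u" by blast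
    qed
  qed
qed

theorem lemma4p8:
  fixes k :: int
    and \<gamma> :: "rat \<times> int \<Rightarrow> rat \<times> int \<Rightarrow> rat \<times> int \<Rightarrow> rat \<times> int \<Rightarrow> bool"
    and x y h b1 :: "rat \<times> int"
  assumes "k \<ge> 2"
    and "\<forall>b \<in> Ab k. \<forall>n l m :: int.
           \<gamma> (b [^]\<^bsub>BS k\<^esub> n) (b [^]\<^bsub>BS k\<^esub> l) (b [^]\<^bsub>BS k\<^esub> m) b \<longleftrightarrow> n * l = m"
    and "x \<in> carrier (BS k)" "y \<in> carrier (BS k)" "h \<in> carrier (BS k)" "b1 \<in> carrier (BS k)"
  shows "tau k \<gamma> x y h b1 \<longleftrightarrow>
    (b1 \<in> Ab k \<and>
     (\<exists>l \<in> Zk k. \<exists>t \<in> Zk k. x = apow l \<and> y = apow t \<and>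
        (\<exists>z :: int. h = b1 [^]\<^bsub>BS k\<^esub> z \<and> l * of_int z = t)))"
proof -
  note k = assms(1) and \<gamma> = assms(2)
  show ?thesis
  proof
    assume tau: "tau k \<gamma> x y h b1"
    then have b1: "b1 \<in> Ab k" using beta_iff_Ab[OF k assms(6)] by (simp add: tau_def)
    obtain l t and z :: int where l: "l \<in> Zk k" "x = apow l" and t: "t \<in> Zk k" "y = apow t"
      and z: "h = b1 [^]\<^bsub>BS k\<^esub> z"
      using tau alpha_iff_apow[OF k assms(3)] alpha_iff_apow[OF k assms(4)]
        centralizer_Ab_BS[OF k b1 assms(5)]
      by (auto simp: tau_def)
    have "t = l * of_int z"
      using tau tau_last_conjunct_iff[OF k \<gamma> b1 l(1) t(1), of z]
        Zk_equation_solvable_for_all_powers_iff[OF k l(1) t(1)] l(2) t(2) z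
      by (simp add: tau_def)
    with b1 l t z show "b1 \<in> Ab k \<and> (\<exists>l \<in> Zk k. \<exists>t \<in> Zk k. x = apow l \<and> y = apow t \<and>
        (\<exists>z :: int. h = b1 [^]\<^bsub>BS k\<^esub> z \<and> l * of_int z = t))" by auto
  next
    assume "b1 \<in> Ab k \<and> (\<exists>l \<in> Zk k. \<exists>t \<in> Zk k. x = apow l \<and> y = apow t \<and>
        (\<exists>z :: int. h = b1 [^]\<^bsub>BS k\<^esub> z \<and> l * of_int z = t))"
    then obtain l t z where b1: "b1 \<in> Ab k" and l: "l \<in> Zk k" "x = apow l"
      and t: "t \<in> Zk k" "y = apow t" and z: "h = b1 [^]\<^bsub>BS k\<^esub> z" and "t = l * of_int z"
      by auto
    then show "tau k \<gamma> x y h b1"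
      unfolding tau_def
      using tau_last_conjunct_iff[OF k \<gamma> b1 l(1) t(1), of z]
        Zk_equation_solvable_for_all_powers_iff[OF k l(1) t(1)]
        alpha_iff_apow[OF k] beta_iff_Ab[OF k] centralizer_Ab_BS[OF k b1] assms(3-6)
      by blast
  qed
qed

end
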